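(* Suppose $r_{\min}<1$ and $\eta>\frac{r_{\min}}2$, and let $\underline\omega_\eta=\min\{\omega_i:r_i<2\eta\}$. For any constant $\varepsilon>0$ let $c_\varepsilon=\min\big\{\frac{n\eta}{(n-1)\underline\omega_\eta}-\varepsilon,\ n\eta-\varepsilon,\ 1\big\}$. Then the set $E_{c_\varepsilon}=\{(x_1,\dots,x_n)\in[0,1]^n:\max_{i,j\in\mathcal V}|x_i-x_j|\ge c_\varepsilon\}$ is finite-time robustly reachable from $[0,1]^n$ under control protocol (C3).
   Context: Fix $n\ge3$, $\mathcal V=\{1,\dots,n\}$, confidence thresholds $r_i\in(0,1]$, $r_{\min}=\min_ir_i$, belief factors $\omega_i\in(0,1)$, $\eta>0$. States $x(t)\in[0,1]^n$. Neighbor set $\mathcal N_i(t)=\{j:|x_j(t)-x_i(t)|\le r_i\}$ (contains $i$), $\Pi_{[0,1]}(y)=\min\{1,\max\{0,y\}\}$, $x_{\rm ave}(t)=\frac1n\sum_ix_i(t)$. Control protocol (C3): $x_i(t+1)=\Pi_{[0,1]}\big(\omega_ix_{\rm ave}(t)+\frac{1-\omega_i}{|\mathcal N_i(t)|}\sum_{j\in\mathcal N_i(t)}x_j(t)+u_i(t)+b_i(t)\big)$, where $\delta_i(t)\in(0,\eta)$ is a chosen parameter, $u_i(t)\in[-\eta+\delta_i(t),\eta-\delta_i(t)]$ a chosen control input, $b_i(t)\in[-\delta_i(t),\delta_i(t)]$ an arbitrary uncertainty; $\delta_i(t),u_i(t)$ may depend on $x(0),\dots,x(t)$. A set $S\subseteq[0,1]^n$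 is finite-time robustly reachable from $[0,1]^n$ under the protocol if there exist constants $T>0$ and $\varepsilon'\in(0,\eta)$, independent of $x(0)$, such that for every $x(0)\in[0,1]^n$, either $x(0)\in S$, or one can choose $\delta_i(t)\in[\varepsilon',\eta)$ and $u_i(t)\in[-\eta+\delta_i(t),\eta-\delta_i(t)]$ for $i\in\mathcal V$, $0\le t<T$, guaranteeing that for arbitrary $b_i(t)\in[-\delta_i(t),\delta_i(t)]$ there is $t\in[1,T]$ with $x(t)\in S$. *)

theory Defs
  imports Complex_Main
begin

text \<open>Agents are indexed by 0..<n (the paper uses 1..n). States are functions
  nat => real; only the components i < n are meaningful.\<close>

definition proj01 :: "real \<Rightarrow> real" where
  "proj01 y = min 1 (max 0 y)"

definition x_ave :: "nat \<Rightarrow> (nat \<Rightarrow> real) \<Rightarrow> real" where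
  "x_ave n x = (\<Sum>j<n. x j) / real n"

definition nbrs :: "nat \<Rightarrow> (nat \<Rightarrow> real) \<Rightarrow> (nat \<Rightarrow> real) \<Rightarrow> nat \<Rightarrow> nat set" where
  "nbrs n r x i = {j. j < n \<and> \<bar>x j - x i\<bar> \<le> r i}"

definition c3_step :: "nat \<Rightarrow> (nat \<Rightarrow> real) \<Rightarrow> (nat \<Rightarrow> real) \<Rightarrow> (nat \<Rightarrow> real)
    \<Rightarrow> (nat \<Rightarrow> real) \<Rightarrow> (nat \<Rightarrow> real) \<Rightarrow> (nat \<Rightarrow> real)" where
  "c3_step n r \<omega> x u b = (\<lambda>i. proj01 (\<omega> i * x_ave n x
      + (1 - \<omega> i) / real (card (nbrs n r x i)) * (\<Sum>j\<in>nbrs n r x i. x j)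
      + u i + b i))"

text \<open>A (feedback) strategy maps the history [x(0),...,x(t)] to the pair
  (delta(t), u(t)). The trajectory history up to time t, driven by the
  uncertainty sequence b (b t i = b_i(t)).\<close>
type_synonym strategy = "(nat \<Rightarrow> real) list \<Rightarrow> (nat \<Rightarrow> real) \<times> (nat \<Rightarrow> real)"

fun c3_hist :: "nat \<Rightarrow> (nat \<Rightarrow> real) \<Rightarrow> (nat \<Rightarrow> real) \<Rightarrow> strategy
    \<Rightarrow> (nat \<Rightarrow> nat \<Rightarrow> real) \<Rightarrow> (nat \<Rightarrow> real) \<Rightarrow> nat \<Rightarrow> (nat \<Rightarrow> real) list" where
  "c3_hist n r \<omega> \<sigma> b x0 0 = [x0]"
| "c3_hist n r \<omega> \<sigma> b x0 (Suc t) =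
     (let h = c3_hist n r \<omega> \<sigma> b x0 t
      in h @ [c3_step n r \<omega> (last h) (snd (\<sigma> h)) (b t)])"

definition c3_traj :: "nat \<Rightarrow> (nat \<Rightarrow> real) \<Rightarrow> (nat \<Rightarrow> real) \<Rightarrow> strategy
    \<Rightarrow> (nat \<Rightarrow> nat \<Rightarrow> real) \<Rightarrow> (nat \<Rightarrow> real) \<Rightarrow> nat \<Rightarrow> (nat \<Rightarrow> real)" where
  "c3_traj n r \<omega> \<sigma> b x0 t = last (c3_hist n r \<omega> \<sigma> b x0 t)"

definition in_cube :: "nat \<Rightarrow> (nat \<Rightarrow> real) \<Rightarrow> bool" where
  "in_cube n x \<longleftrightarrow> (\<forall>i<n. 0 \<le> x i \<and> x i \<le> 1)"

text \<open>Admissible strategy: delta_i(t) in [eps', eta), u_i(t) in [-eta+delta_i(t), eta-delta_i(t)].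
  Required on all histories (harmless: values on unreachable histories can be set freely).\<close>
definition admissible_strategy :: "nat \<Rightarrow> real \<Rightarrow> real \<Rightarrow> strategy \<Rightarrow> bool" where
  "admissible_strategy n \<eta> \<epsilon>' \<sigma> \<longleftrightarrow>
     (\<forall>h i. i < n \<longrightarrow> \<epsilon>' \<le> fst (\<sigma> h) i \<and> fst (\<sigma> h) i < \<eta>
        \<and> - \<eta> + fst (\<sigma> h) i \<le> snd (\<sigma> h) i \<and> snd (\<sigma> h) i \<le> \<eta> - fst (\<sigma> h) i)"

definition admissible_uncertainty :: "nat \<Rightarrow> (nat \<Rightarrow> real) \<Rightarrow> (nat \<Rightarrow> real) \<Rightarrow> strategy
    \<Rightarrow> (nat \<Rightarrow> real) \<Rightarrow> nat \<Rightarrow> (nat \<Rightarrow> nat \<Rightarrow> real) \<Rightarrow> bool" where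
  "admissible_uncertainty n r \<omega> \<sigma> x0 T b \<longleftrightarrow>
     (\<forall>t<T. \<forall>i<n. \<bar>b t i\<bar> \<le> fst (\<sigma> (c3_hist n r \<omega> \<sigma> b x0 t)) i)"

definition robustly_reachable :: "nat \<Rightarrow> (nat \<Rightarrow> real) \<Rightarrow> (nat \<Rightarrow> real) \<Rightarrow> real
    \<Rightarrow> (nat \<Rightarrow> real) set \<Rightarrow> bool" where
  "robustly_reachable n r \<omega> \<eta> S \<longleftrightarrow>
     (\<exists>T::nat. \<exists>\<epsilon>'::real. T > 0 \<and> 0 < \<epsilon>' \<and> \<epsilon>' < \<eta> \<and>
        (\<forall>x0. in_cube n x0 \<longrightarrow> x0 \<in> S \<or>
           (\<exists>\<sigma>. admissible_strategy n \<eta> \<epsilon>' \<sigma> \<and>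
              (\<forall>b. admissible_uncertainty n r \<omega> \<sigma> x0 T b \<longrightarrow>
                 (\<exists>t. 1 \<le> t \<and> t \<le> T \<and> c3_traj n r \<omega> \<sigma> b x0 t \<in> S)))))"

definition E_set :: "nat \<Rightarrow> real \<Rightarrow> (nat \<Rightarrow> real) set" where
  "E_set n c = {x. in_cube n x \<and> Max {\<bar>x i - x j\<bar> | i j. i < n \<and> j < n} \<ge> c}"

end

theory Submission
  imports Defs
begin

text \<open>
  Saturated downward controls drive every agent to 0 within about 1/(\<eta> - 2\<delta>) steps, whatever
  the uncertainty. One step with a common control a then puts all agents within \<delta> of a, and a
  further step pushes an agent k minimising \<omega> among those with r k < 2\<eta> up and all others down.
  If \<eta> > 1/2 this already separates k (at 1) from the others (at 0). Otherwise k ends above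
  r k + 2\<delta> while the others stay below 2\<delta>, so k is its own only neighbour. As long as the spread
  is below c, the value of k is below c + 2\<delta>: the others, whose neighbour averages are at most
  x k / n + 2\<delta> \<le> \<eta> - 2\<delta>, are pushed back to 0, and because c + 2\<delta> lies below the fixed point
  n\<eta> / ((n - 1) \<omega> k) of the leader's update, k gains a fixed amount \<kappa> in every step. Hence the
  spread reaches c after about 1/\<kappa> more steps.
\<close>

lemma sum_div_card_le:
  fixes f :: "'a \<Rightarrow> real"
  assumes "finite A" "A \<noteq> {}" "\<And>a. a \<in> A \<Longrightarrow> f a \<le> M"
  shows "sum f A / real (card A) \<le> M"
  using sum_bounded_above[of A f M] assms by (simp add: pos_divide_le_eq card_gt_0_iff mult.commute)

lemma sum_div_card_ge:
  fixes f :: "'a \<Rightarrow> real"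
  assumes "finite A" "A \<noteq> {}" "\<And>a. a \<in> A \<Longrightarrow> M \<le> f a"
  shows "M \<le> sum f A / real (card A)"
  using sum_bounded_below[of A M f] assms by (simp add: pos_le_divide_eq card_gt_0_iff mult.commute)

lemma proj01_mono: "a \<le> b \<Longrightarrow> proj01 a \<le> proj01 b"
  by (simp add: proj01_def)

lemma proj01_bounds: "0 \<le> proj01 a" "proj01 a \<le> 1"
  by (simp_all add: proj01_def)

lemma x_ave_ge_component:
  assumes "k < n" "\<And>j. j < n \<Longrightarrow> 0 \<le> x j"
  shows "x k / real n \<le> x_ave n x"
proof -
  have "x k \<le> sum x {..<n}"
    using assms by (intro member_le_sum) auto
  then show ?thesis
    unfolding x_ave_def by (simp add: divide_right_mono)
qed

lemma x_ave_le_component: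
  assumes "k < n" "0 \<le> m" "\<And>j. j < n \<Longrightarrow> j \<noteq> k \<Longrightarrow> x j \<le> m"
  shows "x_ave n x \<le> x k / real n + m"
proof -
  have "sum x {..<n} = x k + sum x ({..<n} - {k})"
    using assms(1) by (simp add: sum.remove)
  also have "sum x ({..<n} - {k}) \<le> real (card ({..<n} - {k})) * m"
    using assms(3) by (intro sum_bounded_above) auto
  also have "\<dots> \<le> real n * m"
    using assms(2) card_Diff1_le[of "{..<n}" k] by (intro mult_right_mono) auto
  finally have "sum x {..<n} \<le> x k + real n * m" by simp
  with assms(1) show ?thesis
    unfolding x_ave_def by (simp add: field_simps)
qed

lemma finite_nbrs: "finite (nbrs n r x i)"
  by (simp add: nbrs_def)

lemma nbrs_subset: "nbrs n r x i \<subseteq> {..<n}"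
  by (auto simp: nbrs_def)

lemma self_in_nbrs: "i < n \<Longrightarrow> 0 \<le> r i \<Longrightarrow> i \<in> nbrs n r x i"
  by (simp add: nbrs_def)

definition c3_mix :: "nat \<Rightarrow> (nat \<Rightarrow> real) \<Rightarrow> (nat \<Rightarrow> real) \<Rightarrow> (nat \<Rightarrow> real) \<Rightarrow> nat \<Rightarrow> real" where
  "c3_mix n r \<omega> x i =
     \<omega> i * x_ave n x + (1 - \<omega> i) * (sum x (nbrs n r x i) / real (card (nbrs n r x i)))"

lemma c3_step_eq_mix: "c3_step n r \<omega> x u b i = proj01 (c3_mix n r \<omega> x i + u i + b i)"
  by (simp add: c3_step_def c3_mix_def)

lemma c3_step_le_of_mix_le:
  "c3_mix n r \<omega> x i \<le> M \<Longrightarrow> c3_step n r \<omega> x u b i \<le> proj01 (M + u i + b i)"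
  unfolding c3_step_eq_mix by (simp add: proj01_mono)

lemma c3_step_ge_of_mix_ge:
  "M \<le> c3_mix n r \<omega> x i \<Longrightarrow> proj01 (M + u i + b i) \<le> c3_step n r \<omega> x u b i"
  unfolding c3_step_eq_mix by (simp add: proj01_mono)

lemma c3_mix_le:
  assumes "i < n" "0 \<le> r i" "0 \<le> \<omega> i" "\<omega> i \<le> 1" "\<And>j. j < n \<Longrightarrow> x j \<le> M"
  shows "c3_mix n r \<omega> x i \<le> M"
proof -
  have "x_ave n x \<le> M"
    unfolding x_ave_def using sum_div_card_le[of "{..<n}" x M] assms by auto
  moreover have "sum x (nbrs n r x i) / real (card (nbrs n r x i)) \<le> M"
    using assms self_in_nbrs nbrs_subset by (intro sum_div_card_le finite_nbrs) blast+
  ultimately show ?thesis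
    unfolding c3_mix_def using assms by (intro convex_bound_le) auto
qed

lemma c3_mix_ge:
  assumes "i < n" "0 \<le> r i" "0 \<le> \<omega> i" "\<omega> i \<le> 1" "\<And>j. j < n \<Longrightarrow> M \<le> x j"
  shows "M \<le> c3_mix n r \<omega> x i"
proof -
  have "M \<le> x_ave n x"
    unfolding x_ave_def using sum_div_card_ge[of "{..<n}" M x] assms by auto
  moreover have "M \<le> sum x (nbrs n r x i) / real (card (nbrs n r x i))"
    using assms self_in_nbrs nbrs_subset by (intro sum_div_card_ge finite_nbrs) blast+
  ultimately have "\<omega> i * M + (1 - \<omega> i) * M \<le> c3_mix n r \<omega> x i"
    unfolding c3_mix_def using assms by (intro add_mono mult_left_mono) auto
  then show ?thesis
    by (simp add: algebra_simps)
qed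

text \<open>The clause 2 * m \<le> x k ensures that a follower which sees k sees every agent.\<close>

definition leader_config :: "nat \<Rightarrow> (nat \<Rightarrow> real) \<Rightarrow> nat \<Rightarrow> real \<Rightarrow> (nat \<Rightarrow> real) \<Rightarrow> bool" where
  "leader_config n r k m x \<longleftrightarrow> (\<forall>j<n. j \<noteq> k \<longrightarrow> x j \<le> m) \<and> r k + m < x k \<and> 2 * m \<le> x k"

lemma nbrs_leader:
  assumes "leader_config n r k m x" "k < n" "0 \<le> r k"
  shows "nbrs n r x k = {k}"
  using assms by (force simp: leader_config_def nbrs_def)

lemma nbrs_follower_with_leader:
  assumes "leader_config n r k m x" "\<And>l. l < n \<Longrightarrow> 0 \<le> x l"
    and "j < n" "j \<noteq> k" "k \<in> nbrs n r x j"
  shows "nbrs n r x j = {..<n}"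
proof -
  have closer: "\<bar>x l - x j\<bar> \<le> \<bar>x k - x j\<bar>" if "l < n" "l \<noteq> k" for l
  proof -
    have "0 \<le> x l" "x l \<le> m" "0 \<le> x j" "x j \<le> m" "2 * m \<le> x k"
      using assms that by (auto simp: leader_config_def)
    then show ?thesis by (simp add: abs_le_iff abs_if)
  qed
  have "l \<in> nbrs n r x j" if "l < n" for l
  proof (cases "l = k")
    case False
    with that \<open>k \<in> nbrs n r x j\<close> show ?thesis
      using closer[of l] by (auto simp: nbrs_def)
  qed (use assms in simp)
  with nbrs_subset show ?thesis by blast
qed

lemma c3_mix_leader_ge:
  assumes "leader_config n r k m x" "\<And>l. l < n \<Longrightarrow> 0 \<le> x l"
    and "k < n" "0 \<le> r k" "0 \<le> \<omega> k"
  shows "\<omega> k * (x k / real n) + (1 - \<omega> k) * x k \<le> c3_mix n r \<omega> x k"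
proof -
  have "\<omega> k * (x k / real n) \<le> \<omega> k * x_ave n x"
    using assms x_ave_ge_component by (intro mult_left_mono) auto
  then show ?thesis
    using assms by (simp add: c3_mix_def nbrs_leader)
qed

lemma c3_mix_follower_le:
  assumes "leader_config n r k m x" "\<And>l. l < n \<Longrightarrow> 0 \<le> x l"
    and "k < n" "j < n" "j \<noteq> k" "0 \<le> r j" "0 \<le> \<omega> j" "\<omega> j \<le> 1"
  shows "c3_mix n r \<omega> x j \<le> x k / real n + m"
proof -
  have m: "0 \<le> m" "\<And>l. l < n \<Longrightarrow> l \<noteq> k \<Longrightarrow> x l \<le> m"
    using assms order_trans[OF assms(2)[of j]] by (auto simp: leader_config_def)
  have ave: "x_ave n x \<le> x k / real n + m"
    using assms(3) m by (rule x_ave_le_component)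
  have "sum x (nbrs n r x j) / real (card (nbrs n r x j)) \<le> x k / real n + m"
  proof (cases "k \<in> nbrs n r x j")
    case True
    then show ?thesis
      using ave assms by (simp add: nbrs_follower_with_leader x_ave_def)
  next
    case False
    have "x k / real n \<ge> 0"
      using assms by simp
    moreover have "sum x (nbrs n r x j) / real (card (nbrs n r x j)) \<le> m"
      using False m assms self_in_nbrs nbrs_subset by (intro sum_div_card_le finite_nbrs) blast+
    ultimately show ?thesis by linarith
  qed
  with ave show ?thesis
    unfolding c3_mix_def using assms by (intro convex_bound_le) auto
qed

text \<open>A history [x(0), ..., x(t)] has length t + 1, so the control U t is played at time t.\<close>

definition open_loop :: "real \<Rightarrow> (nat \<Rightarrow> nat \<Rightarrow> real) \<Rightarrow> strategy" where
  "open_loop \<delta> U h = (\<lambda>_. \<delta>, U (length h - 1))"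

lemma length_c3_hist: "length (c3_hist n r \<omega> \<sigma> b x0 t) = Suc t"
  by (induction t) (simp_all add: Let_def)

lemma c3_traj_0: "c3_traj n r \<omega> \<sigma> b x0 0 = x0"
  by (simp add: c3_traj_def)

lemma c3_traj_open_loop_Suc:
  "c3_traj n r \<omega> (open_loop \<delta> U) b x0 (Suc t) =
     c3_step n r \<omega> (c3_traj n r \<omega> (open_loop \<delta> U) b x0 t) (U t) (b t)"
  by (simp add: c3_traj_def Let_def open_loop_def length_c3_hist)

lemma admissible_open_loop:
  assumes "\<delta> < \<eta>" "\<And>t i. i < n \<Longrightarrow> \<bar>U t i\<bar> \<le> \<eta> - \<delta>"
  shows "admissible_strategy n \<eta> \<delta> (open_loop \<delta> U)"
proof -
  have "- \<eta> + \<delta> \<le> U t i \<and> U t i \<le> \<eta> - \<delta>" if "i < n" for t i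
    using assms(2)[of i t] that by (auto simp: abs_le_iff)
  with assms(1) show ?thesis
    by (auto simp: admissible_strategy_def open_loop_def)
qed

lemma admissible_uncertainty_open_loop:
  "admissible_uncertainty n r \<omega> (open_loop \<delta> U) x0 T b \<longleftrightarrow> (\<forall>t<T. \<forall>i<n. \<bar>b t i\<bar> \<le> \<delta>)"
  by (simp add: admissible_uncertainty_def open_loop_def)

lemma E_setI:
  assumes "in_cube n x" "i < n" "j < n" "c \<le> \<bar>x i - x j\<bar>"
  shows "x \<in> E_set n c"
proof -
  have "finite {\<bar>x i - x j\<bar> | i j. i < n \<and> j < n}"
    by (rule finite_image_set2) auto
  then have "\<bar>x i - x j\<bar> \<le> Max {\<bar>x i - x j\<bar> | i j. i < n \<and> j < n}"
    using assms by (intro Max_ge) auto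
  with assms show ?thesis
    unfolding E_set_def by auto
qed

lemma small_margin_exists:
  fixes \<eta> \<rho> \<epsilon> w :: real
  assumes "0 < \<eta>" "\<rho> < 2 * \<eta>" "0 < \<epsilon>" "0 < w"
  obtains \<delta> where "0 < \<delta>" "4 * \<delta> \<le> \<eta>" "7 * \<delta> \<le> 2 * \<eta> - \<rho>" "(4 * real n + 2) * \<delta> \<le> \<epsilon>"
    "4 * (1 + w) * \<delta> \<le> w * \<epsilon>" "\<delta> \<le> 1/4" "1/2 < \<eta> \<Longrightarrow> 3 * \<delta> \<le> \<eta> - 1/2"
proof -
  define h where "h = (if 1/2 < \<eta> then (\<eta> - 1/2) / 3 else 1)"
  define \<delta> where "\<delta> = min (\<eta> / 4) (min ((2 * \<eta> - \<rho>) / 7) (min (\<epsilon> / (4 * real n + 2))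
    (min (w * \<epsilon> / (4 * (1 + w))) (min (1 / 4) h))))"
  have "0 < h"
    by (simp add: h_def)
  with assms have "0 < \<delta>"
    by (simp add: \<delta>_def)
  moreover have le: "\<delta> \<le> \<eta> / 4" "\<delta> \<le> (2 * \<eta> - \<rho>) / 7" "\<delta> \<le> \<epsilon> / (4 * real n + 2)"
    "\<delta> \<le> w * \<epsilon> / (4 * (1 + w))" "\<delta> \<le> 1 / 4" "\<delta> \<le> h"
    unfolding \<delta>_def by (meson min.cobounded1 min.cobounded2 order_trans)+
  moreover have "(4 * real n + 2) * \<delta> \<le> \<epsilon>" "4 * (1 + w) * \<delta> \<le> w * \<epsilon>"
    using le(3,4) \<open>0 < w\<close> by (simp_all add: pos_le_divide_eq mult.commute)
  moreover have "3 * \<delta> \<le> \<eta> - 1/2" if "1/2 < \<eta>"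
    using le(6) that by (simp add: h_def)
  ultimately show ?thesis
    using that by simp
qed

lemma growth_margin:
  fixes n :: nat and \<omega> \<eta> \<epsilon> \<delta> c y w :: real
  assumes "2 \<le> n" "0 < \<omega>" "w = \<omega> * (real n - 1) / real n"
    and "c \<le> real n * \<eta> / ((real n - 1) * \<omega>) - \<epsilon>" "c \<le> real n * \<eta> - \<epsilon>"
    and "(4 * real n + 2) * \<delta> \<le> \<epsilon>" "4 * (1 + w) * \<delta> \<le> w * \<epsilon>" "y < c + 2 * \<delta>"
  shows "y / real n + 4 * \<delta> \<le> \<eta>"
    and "y + w * \<epsilon> / 2 \<le> \<omega> * (y / real n) + (1 - \<omega>) * y + \<eta> - 2 * \<delta>"
proof -
  have n: "0 < real n" "0 < real n - 1"
    using assms(1) by auto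
  have "y \<le> real n * (\<eta> - 4 * \<delta>)"
    using assms(5,6,8) by (simp add: algebra_simps)
  with n have "y / real n \<le> \<eta> - 4 * \<delta>"
    by (simp add: pos_divide_le_eq mult.commute)
  then show "y / real n + 4 * \<delta> \<le> \<eta>"
    by simp
  have w: "0 \<le> w" "w * (real n * \<eta> / ((real n - 1) * \<omega>)) = \<eta>"
    using n assms(2) by (simp_all add: assms(3) field_simps)
  have "w * y \<le> w * (c + 2 * \<delta>)"
    using w(1) assms(8) by (intro mult_left_mono) auto
  also have "\<dots> \<le> w * (real n * \<eta> / ((real n - 1) * \<omega>) - \<epsilon> + 2 * \<delta>)"
    using w(1) assms(4) by (intro mult_left_mono) auto
  finally have "w * y \<le> \<eta> - w * \<epsilon> + 2 * w * \<delta>"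
    using w(2) by (simp add: algebra_simps)
  moreover have "\<omega> * (y / real n) + (1 - \<omega>) * y = y - w * y"
    using n by (simp add: assms(3) field_simps)
  ultimately show "y + w * \<epsilon> / 2 \<le> \<omega> * (y / real n) + (1 - \<omega>) * y + \<eta> - 2 * \<delta>"
    using assms(7) by (simp add: algebra_simps)
qed

definition separation_schedule :: "nat \<Rightarrow> nat \<Rightarrow> real \<Rightarrow> real \<Rightarrow> real \<Rightarrow> nat \<Rightarrow> nat \<Rightarrow> real" where
  "separation_schedule N k \<eta> \<delta> a t i =
     (if t < N then - (\<eta> - \<delta>) else if t = N then a else if i = k then \<eta> - \<delta> else - (\<eta> - \<delta>))"

locale c3_run =
  fixes n :: nat and r \<omega> :: "nat \<Rightarrow> real" and U b X :: "nat \<Rightarrow> nat \<Rightarrow> real"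
    and \<delta> :: real and T :: nat
  assumes r_nonneg: "\<And>i. i < n \<Longrightarrow> 0 \<le> r i"
    and \<omega>_unit: "\<And>i. i < n \<Longrightarrow> 0 \<le> \<omega> i \<and> \<omega> i \<le> 1"
    and X_0: "in_cube n (X 0)"
    and X_Suc: "\<And>t. X (Suc t) = c3_step n r \<omega> (X t) (U t) (b t)"
    and noise: "\<And>t i. t < T \<Longrightarrow> i < n \<Longrightarrow> \<bar>b t i\<bar> \<le> \<delta>"

lemma c3_run_open_loop:
  assumes "\<And>i. i < n \<Longrightarrow> 0 \<le> r i" "\<And>i. i < n \<Longrightarrow> 0 \<le> \<omega> i \<and> \<omega> i \<le> 1"
    and "in_cube n x0" "admissible_uncertainty n r \<omega> (open_loop \<delta> U) x0 T b"
  shows "c3_run n r \<omega> U b (c3_traj n r \<omega> (open_loop \<delta> U) b x0) \<delta> T"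
  using assms by unfold_locales
    (simp_all add: c3_traj_0 c3_traj_open_loop_Suc admissible_uncertainty_open_loop)

context c3_run
begin

lemma X_unit: "i < n \<Longrightarrow> 0 \<le> X t i \<and> X t i \<le> 1"
  using X_0 by (cases t) (auto simp: in_cube_def X_Suc c3_step_eq_mix proj01_bounds)

lemma in_cube_X: "in_cube n (X t)"
  by (simp add: in_cube_def X_unit)

lemma step_le:
  "i < n \<Longrightarrow> (\<And>j. j < n \<Longrightarrow> X t j \<le> M) \<Longrightarrow> X (Suc t) i \<le> proj01 (M + U t i + b t i)"
  unfolding X_Suc using r_nonneg \<omega>_unit by (intro c3_step_le_of_mix_le c3_mix_le) auto

lemma step_ge:
  "i < n \<Longrightarrow> (\<And>j. j < n \<Longrightarrow> M \<le> X t j) \<Longrightarrow> proj01 (M + U t i + b t i) \<le> X (Suc t) i"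
  unfolding X_Suc using r_nonneg \<omega>_unit by (intro c3_step_ge_of_mix_ge c3_mix_ge) auto

lemma drive_to_zero:
  assumes "0 < d" "N \<le> T" "1 \<le> real N * d" "\<And>t i. t < N \<Longrightarrow> i < n \<Longrightarrow> U t i \<le> - (d + \<delta>)"
    and "i < n"
  shows "X N i = 0"
proof -
  have "\<forall>i<n. X t i \<le> max 0 (1 - real t * d)" if "t \<le> N" for t
    using that
  proof (induction t)
    case 0
    then show ?case using X_unit by simp
  next
    case (Suc t)
    show ?case
    proof (intro allI impI)
      fix i assume "i < n"
      with Suc have "X (Suc t) i \<le> proj01 (max 0 (1 - real t * d) + U t i + b t i)"
        by (intro step_le) auto
      also have "\<dots> \<le> proj01 (max 0 (1 - real t * d) - d)"
        using Suc.prems \<open>i < n\<close> assms(2) assms(4)[of t i] noise[of t i] by (intro proj01_mono) auto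
      also have "\<dots> \<le> max 0 (1 - real (Suc t) * d)"
        using \<open>0 < d\<close> by (auto simp: proj01_def algebra_simps)
      finally show "X (Suc t) i \<le> max 0 (1 - real (Suc t) * d)" .
    qed
  qed
  with assms X_unit[of i N] show ?thesis
    by force
qed

lemma common_control_from_zero:
  assumes "t < T" "\<And>j. j < n \<Longrightarrow> X t j = 0" "U t i = a" "0 \<le> \<delta>" "\<delta> \<le> a" "a + \<delta> \<le> 1"
    and "i < n"
  shows "a - \<delta> \<le> X (Suc t) i \<and> X (Suc t) i \<le> a + \<delta>"
proof
  have "proj01 (a - \<delta>) \<le> proj01 (0 + U t i + b t i)"
    using assms noise[of t i] by (intro proj01_mono) auto
  also have "\<dots> \<le> X (Suc t) i"
    using assms by (intro step_ge) auto
  finally show "a - \<delta> \<le> X (Suc t) i"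
    using assms by (simp add: proj01_def)
  have "X (Suc t) i \<le> proj01 (0 + U t i + b t i)"
    using assms by (intro step_le) auto
  also have "\<dots> \<le> proj01 (a + \<delta>)"
    using assms noise[of t i] by (intro proj01_mono) auto
  finally show "X (Suc t) i \<le> a + \<delta>"
    using assms by (simp add: proj01_def)
qed

lemma reset_then_split:
  assumes "k < n" "Suc (Suc N) \<le> T" "0 \<le> \<delta>" "2 * \<delta> < \<eta>" "1 \<le> real N * (\<eta> - 2 * \<delta>)"
    and "\<delta> \<le> a" "a + \<delta> \<le> 1"
    and "\<And>t i. t < N \<Longrightarrow> U t i = - (\<eta> - \<delta>)" "\<And>i. U N i = a"
    and "U (Suc N) k = \<eta> - \<delta>" "\<And>j. j \<noteq> k \<Longrightarrow> U (Suc N) j = - (\<eta> - \<delta>)"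
  shows "proj01 (a + \<eta> - 3 * \<delta>) \<le> X (Suc (Suc N)) k"
    and "j < n \<Longrightarrow> j \<noteq> k \<Longrightarrow> X (Suc (Suc N)) j \<le> proj01 (a - \<eta> + 3 * \<delta>)"
proof -
  have zero: "X N i = 0" if "i < n" for i
    using assms that by (intro drive_to_zero[of "\<eta> - 2 * \<delta>"]) auto
  have settled: "a - \<delta> \<le> X (Suc N) i \<and> X (Suc N) i \<le> a + \<delta>" if "i < n" for i
    using assms that zero by (intro common_control_from_zero) auto
  have "proj01 (a + \<eta> - 3 * \<delta>) \<le> proj01 (a - \<delta> + U (Suc N) k + b (Suc N) k)"
    using assms noise[of "Suc N" k] by (intro proj01_mono) auto
  also have "\<dots> \<le> X (Suc (Suc N)) k"
    using assms settled by (intro step_ge) auto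
  finally show "proj01 (a + \<eta> - 3 * \<delta>) \<le> X (Suc (Suc N)) k" .
  assume "j < n" "j \<noteq> k"
  then have "X (Suc (Suc N)) j \<le> proj01 (a + \<delta> + U (Suc N) j + b (Suc N) j)"
    using settled by (intro step_le) auto
  also have "\<dots> \<le> proj01 (a - \<eta> + 3 * \<delta>)"
    using assms \<open>j < n\<close> \<open>j \<noteq> k\<close> noise[of "Suc N" j] by (intro proj01_mono) auto
  finally show "X (Suc (Suc N)) j \<le> proj01 (a - \<eta> + 3 * \<delta>)" .
qed

lemma follower_step_zero:
  assumes "t < T" "k < n" "j < n" "j \<noteq> k"
    and "leader_config n r k (2 * \<delta>) (X t)" "X t k / real n + 4 * \<delta> \<le> \<eta>" "U t j = - (\<eta> - \<delta>)"
  shows "X (Suc t) j = 0"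
proof -
  have "X (Suc t) j \<le> proj01 (X t k / real n + 2 * \<delta> + U t j + b t j)"
    unfolding X_Suc using assms r_nonneg \<omega>_unit X_unit
    by (intro c3_step_le_of_mix_le c3_mix_follower_le) auto
  also have "\<dots> = 0"
    using assms noise[of t j] by (simp add: proj01_def)
  finally show ?thesis
    using X_unit[OF assms(3), of "Suc t"] by linarith
qed

lemma leader_step_ge:
  assumes "t < T" "k < n" "leader_config n r k (2 * \<delta>) (X t)" "U t k = \<eta> - \<delta>"
  shows "proj01 (\<omega> k * (X t k / real n) + (1 - \<omega> k) * X t k + \<eta> - 2 * \<delta>) \<le> X (Suc t) k"
proof -
  have "proj01 (\<omega> k * (X t k / real n) + (1 - \<omega> k) * X t k + \<eta> - 2 * \<delta>)
      \<le> proj01 (\<omega> k * (X t k / real n) + (1 - \<omega> k) * X t k + U t k + b t k)"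
    using assms noise[of t k] by (intro proj01_mono) auto
  also have "\<dots> \<le> X (Suc t) k"
    unfolding X_Suc using assms r_nonneg \<omega>_unit X_unit
    by (intro c3_step_ge_of_mix_ge c3_mix_leader_ge) auto
  finally show ?thesis .
qed

lemma leader_advances:
  assumes "t < T" "k < n" "j < n" "j \<noteq> k" "0 \<le> \<delta>" "0 < \<kappa>" "c \<le> 1"
    and "U t k = \<eta> - \<delta>" "\<And>i. i \<noteq> k \<Longrightarrow> U t i = - (\<eta> - \<delta>)"
    and growth: "\<And>y. 0 \<le> y \<Longrightarrow> y < c + 2 * \<delta> \<Longrightarrow>
      y / real n + 4 * \<delta> \<le> \<eta> \<and> y + \<kappa> \<le> \<omega> k * (y / real n) + (1 - \<omega> k) * y + \<eta> - 2 * \<delta>"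
    and lead: "leader_config n r k (2 * \<delta>) (X t)" and no_gap: "\<bar>X t k - X t j\<bar> < c"
  shows "c \<le> \<bar>X (Suc t) k - X (Suc t) j\<bar>
    \<or> leader_config n r k (2 * \<delta>) (X (Suc t)) \<and> X t k + \<kappa> \<le> X (Suc t) k"
proof -
  have "X t j \<le> 2 * \<delta>"
    using lead assms(3,4) by (simp add: leader_config_def)
  then have "X t k < c + 2 * \<delta>"
    using no_gap by linarith
  with growth[of "X t k"] X_unit[OF assms(2)]
  have room: "X t k / real n + 4 * \<delta> \<le> \<eta>"
    and gain: "X t k + \<kappa> \<le> \<omega> k * (X t k / real n) + (1 - \<omega> k) * X t k + \<eta> - 2 * \<delta>"
    by auto
  have followers: "X (Suc t) i = 0" if "i < n" "i \<noteq> k" for i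
    using follower_step_zero that assms room by blast
  have "min 1 (X t k + \<kappa>) \<le> X (Suc t) k"
    using leader_step_ge[OF assms(1,2) lead assms(8)] proj01_mono[OF gain] X_unit[OF assms(2)] \<open>0 < \<kappa>\<close>
    by (simp add: proj01_def)
  then consider "X (Suc t) k = 1" | "X t k + \<kappa> \<le> X (Suc t) k"
    using X_unit[OF assms(2), of "Suc t"] by linarith
  then show ?thesis
  proof cases
    case 1
    then show ?thesis
      using followers assms(3,4,7) by simp
  next
    case 2
    then have "leader_config n r k (2 * \<delta>) (X (Suc t))"
      using lead followers assms(5,6) by (fastforce simp: leader_config_def)
    with 2 show ?thesis by simp
  qed
qed

lemma leader_breaks_away:
  assumes "k < n" "j < n" "j \<noteq> k" "0 \<le> \<delta>" "t0 + M \<le> T" "1 < real M * \<kappa>" "c \<le> 1"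
    and "\<And>t. t0 \<le> t \<Longrightarrow> t < t0 + M \<Longrightarrow> U t k = \<eta> - \<delta>"
    and "\<And>t i. t0 \<le> t \<Longrightarrow> t < t0 + M \<Longrightarrow> i \<noteq> k \<Longrightarrow> U t i = - (\<eta> - \<delta>)"
    and growth: "\<And>y. 0 \<le> y \<Longrightarrow> y < c + 2 * \<delta> \<Longrightarrow>
      y / real n + 4 * \<delta> \<le> \<eta> \<and> y + \<kappa> \<le> \<omega> k * (y / real n) + (1 - \<omega> k) * y + \<eta> - 2 * \<delta>"
    and "leader_config n r k (2 * \<delta>) (X t0)"
  shows "\<exists>t. t0 \<le> t \<and> t \<le> t0 + M \<and> c \<le> \<bar>X t k - X t j\<bar>"
proof -
  have "0 < \<kappa>"
    by (rule ccontr) (use assms(6) mult_nonneg_nonpos[of "real M" \<kappa>] in auto)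
  have "(\<exists>t. t0 \<le> t \<and> t \<le> t0 + m \<and> c \<le> \<bar>X t k - X t j\<bar>)
      \<or> leader_config n r k (2 * \<delta>) (X (t0 + m)) \<and> real m * \<kappa> \<le> X (t0 + m) k"
    if "m \<le> M" for m
    using that
  proof (induction m)
    case 0
    then show ?case
      using assms(11) X_unit[OF assms(1)] by simp
  next
    case (Suc m)
    show ?case
    proof (cases "\<exists>t. t0 \<le> t \<and> t \<le> t0 + m \<and> c \<le> \<bar>X t k - X t j\<bar>")
      case True
      then show ?thesis by force
    next
      case False
      with Suc have lead: "leader_config n r k (2 * \<delta>) (X (t0 + m))"
        and progress: "real m * \<kappa> \<le> X (t0 + m) k" and no_gap: "\<bar>X (t0 + m) k - X (t0 + m) j\<bar> < c"
        by force+
      from leader_advances[OF _ assms(1-4) \<open>0 < \<kappa>\<close> assms(7) _ _ growth lead no_gap]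
      have "c \<le> \<bar>X (Suc (t0 + m)) k - X (Suc (t0 + m)) j\<bar>
        \<or> leader_config n r k (2 * \<delta>) (X (Suc (t0 + m))) \<and> X (t0 + m) k + \<kappa> \<le> X (Suc (t0 + m)) k"
        using Suc.prems assms(5,8,9) by simp
      then show ?thesis
        using progress by (auto simp: algebra_simps intro: exI[of _ "Suc (t0 + m)"])
    qed
  qed
  moreover have "\<not> real M * \<kappa> \<le> X (t0 + M) k"
    using assms(6) X_unit[OF assms(1)] by (meson less_le_trans not_le)
  ultimately show ?thesis by blast
qed

lemma separation_schedule_spreads:
  assumes U: "U = separation_schedule N k \<eta> \<delta> a" and a: "a = min (1/2) (\<eta> - \<delta>)"
    and n: "2 \<le> n" and k: "k < n" and \<delta>: "0 < \<delta>" "4 * \<delta> \<le> \<eta>" "\<delta> \<le> 1/4" and "c \<le> 1"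
    and reset_time: "1 \<le> real N * (\<eta> - 2 * \<delta>)" and T: "N + 2 + M \<le> T"
    and growth_time: "1 < real M * \<kappa>"
    and high: "1/2 < \<eta> \<Longrightarrow> 3 * \<delta> \<le> \<eta> - 1/2" and low: "\<eta> \<le> 1/2 \<Longrightarrow> 7 * \<delta> \<le> 2 * \<eta> - r k"
    and growth: "\<And>y. 0 \<le> y \<Longrightarrow> y < c + 2 * \<delta> \<Longrightarrow>
      y / real n + 4 * \<delta> \<le> \<eta> \<and> y + \<kappa> \<le> \<omega> k * (y / real n) + (1 - \<omega> k) * y + \<eta> - 2 * \<delta>"
  shows "\<exists>t. 1 \<le> t \<and> t \<le> T \<and> X t \<in> E_set n c"
proof -
  define j where "j = (if k = 0 then 1 else 0 :: nat)"
  have j: "j < n" "j \<noteq> k"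
    using n k by (auto simp: j_def)
  have "\<delta> \<le> a" "a + \<delta> \<le> 1" "Suc (Suc N) \<le> T" "0 \<le> \<delta>" "2 * \<delta> < \<eta>"
    using a \<delta> T by (auto simp: min_def)
  moreover have "\<And>t i. t < N \<Longrightarrow> U t i = - (\<eta> - \<delta>)" "\<And>i. U N i = a" "U (Suc N) k = \<eta> - \<delta>"
    "\<And>i. i \<noteq> k \<Longrightarrow> U (Suc N) i = - (\<eta> - \<delta>)"
    by (simp_all add: U separation_schedule_def)
  ultimately have leader: "proj01 (a + \<eta> - 3 * \<delta>) \<le> X (Suc (Suc N)) k"
    and followers: "\<And>i. i < n \<Longrightarrow> i \<noteq> k \<Longrightarrow> X (Suc (Suc N)) i \<le> proj01 (a - \<eta> + 3 * \<delta>)"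
    using reset_then_split[OF k _ _ _ reset_time] by blast+
  show ?thesis
  proof (cases "1/2 < \<eta>")
    case True
    then have "1 \<le> X (Suc (Suc N)) k" "X (Suc (Suc N)) j \<le> 0"
      using leader followers[OF j] a high by (auto simp: proj01_def)
    then have "X (Suc (Suc N)) k = 1" "X (Suc (Suc N)) j = 0"
      using X_unit[OF k, of "Suc (Suc N)"] X_unit[OF j(1), of "Suc (Suc N)"] by linarith+
    then show ?thesis
      using \<open>c \<le> 1\<close> T by (intro exI[of _ "Suc (Suc N)"]) (auto intro: E_setI[OF in_cube_X k j(1)])
  next
    case False
    then have "proj01 (a + \<eta> - 3 * \<delta>) = 2 * \<eta> - 4 * \<delta>" "proj01 (a - \<eta> + 3 * \<delta>) = 2 * \<delta>"
      using a \<delta>(1,2) by (simp_all add: proj01_def min_def)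
    with leader followers have "2 * \<eta> - 4 * \<delta> \<le> X (Suc (Suc N)) k"
      "\<forall>i<n. i \<noteq> k \<longrightarrow> X (Suc (Suc N)) i \<le> 2 * \<delta>"
      by auto
    with False \<delta>(1,2) low have "leader_config n r k (2 * \<delta>) (X (Suc (Suc N)))"
      unfolding leader_config_def by auto
    then obtain t where "Suc (Suc N) \<le> t" "t \<le> Suc (Suc N) + M" "c \<le> \<bar>X t k - X t j\<bar>"
      using leader_breaks_away[OF k j, of "Suc (Suc N)" M \<kappa> c \<eta>] U \<delta>(1) T growth_time \<open>c \<le> 1\<close> growth
      by (auto simp: separation_schedule_def)
    then show ?thesis
      using T by (intro exI[of _ t]) (auto intro: E_setI[OF in_cube_X k j(1)])
  qed
qed

end

lemma E_set_robustly_reachable: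
  assumes "2 \<le> n" "\<forall>i<n. 0 \<le> r i" "\<forall>i<n. 0 \<le> \<omega> i \<and> \<omega> i \<le> 1" "0 < \<eta>" "0 < \<epsilon>"
    and "k < n" "r k < 2 * \<eta>" "0 < \<omega> k"
    and "c \<le> real n * \<eta> / ((real n - 1) * \<omega> k) - \<epsilon>" "c \<le> real n * \<eta> - \<epsilon>" "c \<le> 1"
  shows "robustly_reachable n r \<omega> \<eta> (E_set n c)"
proof -
  define w where "w = \<omega> k * (real n - 1) / real n"
  have "0 < w"
    using assms(1,8) by (simp add: w_def)
  obtain \<delta> where \<delta>: "0 < \<delta>" "4 * \<delta> \<le> \<eta>" "7 * \<delta> \<le> 2 * \<eta> - r k" "(4 * real n + 2) * \<delta> \<le> \<epsilon>"
    "4 * (1 + w) * \<delta> \<le> w * \<epsilon>" "\<delta> \<le> 1/4" "1/2 < \<eta> \<Longrightarrow> 3 * \<delta> \<le> \<eta> - 1/2"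
    using small_margin_exists[OF assms(4,7,5) \<open>0 < w\<close>] by blast
  define a where "a = min (1/2) (\<eta> - \<delta>)"
  define \<kappa> where "\<kappa> = w * \<epsilon> / 2"
  define N where "N = nat \<lceil>1 / (\<eta> - 2 * \<delta>)\<rceil>"
  define M where "M = nat \<lceil>1 / \<kappa>\<rceil> + 1"
  define T where "T = N + 2 + M"
  define U where "U = separation_schedule N k \<eta> \<delta> a"
  have "0 < \<eta> - 2 * \<delta>" "0 < \<kappa>"
    using \<delta>(1,2) \<open>0 < w\<close> assms(5) by (simp_all add: \<kappa>_def)
  moreover have "1 / (\<eta> - 2 * \<delta>) \<le> real N" "1 / \<kappa> < real M"
    using real_nat_ceiling_ge[of "1 / (\<eta> - 2 * \<delta>)"] real_nat_ceiling_ge[of "1 / \<kappa>"]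
    by (simp_all add: N_def M_def)
  ultimately have reset_time: "1 \<le> real N * (\<eta> - 2 * \<delta>)" and growth_time: "1 < real M * \<kappa>"
    by (simp_all add: pos_divide_le_eq pos_divide_less_eq)
  have admissible: "admissible_strategy n \<eta> \<delta> (open_loop \<delta> U)"
    using \<delta>(1,2) by (intro admissible_open_loop) (auto simp: U_def a_def separation_schedule_def)
  have growth: "y / real n + 4 * \<delta> \<le> \<eta> \<and> y + \<kappa> \<le> \<omega> k * (y / real n) + (1 - \<omega> k) * y + \<eta> - 2 * \<delta>"
    if "y < c + 2 * \<delta>" for y
    using growth_margin[OF assms(1,8) w_def assms(9,10) \<delta>(4,5) that] by (simp add: \<kappa>_def)
  have "\<exists>t. 1 \<le> t \<and> t \<le> T \<and> c3_traj n r \<omega> (open_loop \<delta> U) b x0 t \<in> E_set n c"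
    if "in_cube n x0" "admissible_uncertainty n r \<omega> (open_loop \<delta> U) x0 T b" for x0 b
  proof -
    interpret c3_run n r \<omega> U b "c3_traj n r \<omega> (open_loop \<delta> U) b x0" \<delta> T
      using assms(2,3) that by (intro c3_run_open_loop) auto
    show ?thesis
      using reset_time growth_time growth \<delta>(3,7)
      by (intro separation_schedule_spreads[OF U_def a_def assms(1,6) \<delta>(1,2,6) assms(11)])
        (auto simp: T_def)
  qed
  with admissible \<delta>(1,2) assms(4) show ?thesis
    unfolding robustly_reachable_def by (intro exI[of _ T] exI[of _ \<delta>]) (auto simp: T_def)
qed

theorem lemma5:
  fixes n :: nat and r \<omega> :: "nat \<Rightarrow> real" and \<eta> \<epsilon> :: real
  assumes "n \<ge> 3"
    and "\<forall>i<n. 0 < r i \<and> r i \<le> 1"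
    and "\<forall>i<n. 0 < \<omega> i \<and> \<omega> i < 1"
    and "\<eta> > 0"
    and "Min (r ` {..<n}) < 1"
    and "\<eta> > Min (r ` {..<n}) / 2"
    and "\<epsilon> > 0"
  shows "robustly_reachable n r \<omega> \<eta>
           (E_set n (min (real n * \<eta> / ((real n - 1) * Min {\<omega> i | i. i < n \<and> r i < 2 * \<eta>}) - \<epsilon>)
                        (min (real n * \<eta> - \<epsilon>) 1)))"
proof -
  have "Min (r ` {..<n}) \<in> r ` {..<n}"
    using assms(1) by (intro Min_in) (auto simp: lessThan_empty_iff)
  then obtain i where "i < n" "r i = Min (r ` {..<n})"
    by (metis imageE lessThan_iff)
  with assms(6) have "{\<omega> i | i. i < n \<and> r i < 2 * \<eta>} \<noteq> {}"
    by auto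
  then obtain k where k: "k < n" "r k < 2 * \<eta>" "\<omega> k = Min {\<omega> i | i. i < n \<and> r i < 2 * \<eta>}"
    using Min_in[of "{\<omega> i | i. i < n \<and> r i < 2 * \<eta>}"] by force
  show ?thesis
    using assms(1-4,7) k
    by (intro E_set_robustly_reachable[of n r \<omega> \<eta> \<epsilon> k]) (auto simp: less_imp_le)
qed

end
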